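(* Let $n\ge 1$, $\nu>0$, and let $\alpha_u,\alpha_y\ge 0$ with $\max\{\alpha_u,\alpha_y\}>0$. Let $M\in\mathbb{R}^{n\times n}$ be diagonal with positive diagonal entries and $L\in\mathbb{R}^{n\times n}$. Let $\mathcal{A}_k\subseteq\{1,\dots,n\}$ and let $\Pi_k$ be the diagonal matrix with $(\Pi_k)_{ii}=1$ if $i\in\mathcal{A}_k$ and $0$ otherwise. Set $\gamma_1=\frac{\alpha_y^2\nu}{\alpha_y^2\nu+\alpha_u^2}$, $\gamma_2=\frac{\alpha_u^2}{\alpha_y^2\nu+\alpha_u^2}$, $$\mathbb{S}_k=\nu LM^{-1}L^T+M-\frac{1}{\alpha_y^2\nu+\alpha_u^2}(\alpha_y\nu LM^{-1}-\alpha_u I)\Pi_k M\Pi_k(\alpha_y\nu LM^{-1}-\alpha_u I)^T,$$ $L_1=\sqrt{\nu}L(I-\gamma_1\Pi_k)^{1/2}+(I-\gamma_2\Pi_k)^{1/2}M$ and $\widehat{\mathbb{S}}_k=L_1M^{-1}L_1^T$. If $\mathcal{A}_k=\{1,\dots,n\}$, then $\widehat{\mathbb{S}}_k=\mathbb{S}_k$.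
   Context: Square roots of nonnegative diagonal matrices are taken entrywise. *)

theory Defs
  imports "HOL-Analysis.Analysis"
begin

definition sel_mat :: "'n::finite set \<Rightarrow> real^'n^'n" where
  "sel_mat A = (\<chi> i j. if i = j \<and> i \<in> A then 1 else 0)"

text \<open>Entrywise square root (used for nonnegative diagonal matrices).\<close>
definition diag_sqrt :: "real^'n^'n \<Rightarrow> real^'n^'n" where
  "diag_sqrt D = (\<chi> i j. sqrt (D $ i $ j))"

definition is_diag :: "real^'n^'n \<Rightarrow> bool" where
  "is_diag D \<longleftrightarrow> (\<forall>i j. i \<noteq> j \<longrightarrow> D $ i $ j = 0)"

end

theory Submission
  imports Defs
begin

text \<open>When every index is active, \<open>\<Pi> = I\<close>, so \<open>L\<^sub>1 = a L + b M\<close> with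
  \<open>a = \<surd>(\<nu>\<gamma>\<^sub>2)\<close>, \<open>b = \<surd>\<gamma>\<^sub>1\<close>, and \<open>B = (\<alpha>\<^sub>y\<nu> L - \<alpha>\<^sub>u M) M\<^sup>-\<^sup>1\<close>, so that
  \<open>B M B\<^sup>T = K M\<^sup>-\<^sup>1 K\<^sup>T\<close> with \<open>K = \<alpha>\<^sub>y\<nu> L - \<alpha>\<^sub>u M\<close>. For symmetric \<open>M\<close> the congruence
  \<open>(p L + q M) M\<^sup>-\<^sup>1 (p L + q M)\<^sup>T = p\<^sup>2 L M\<^sup>-\<^sup>1 L\<^sup>T + p q (L + L\<^sup>T) + q\<^sup>2 M\<close> puts both sides
  into the same shape, and the coefficients match because \<open>\<gamma>\<^sub>1 + \<gamma>\<^sub>2 = 1\<close>.\<close>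

lemma matrix_add_rdistrib: "((A::'a::semiring_1^'m^'n) + B) ** C = A ** C + B ** C"
  by (vector matrix_matrix_mult_def sum.distrib[symmetric] field_simps)

lemma matrix_diff_rdistrib: "((A::'a::ring_1^'m^'n) - B) ** C = A ** C - B ** C"
  by (vector matrix_matrix_mult_def sum_subtractf[symmetric] field_simps)

lemma transpose_add: "transpose ((A::'a::semiring_1^'m^'n) + B) = transpose A + transpose B"
  by (simp add: transpose_def vec_eq_iff)

lemma diag_sqrt_scaleR_mat_1: "diag_sqrt (k *\<^sub>R mat 1 :: real^'n^'n) = sqrt k *\<^sub>R mat 1"
  by (simp add: diag_sqrt_def mat_def vec_eq_iff)

lemma sel_mat_UNIV: "sel_mat (UNIV::'n::finite set) = mat 1"
  by (simp add: sel_mat_def mat_def vec_eq_iff)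

lemma is_diag_transpose: "is_diag D \<Longrightarrow> transpose D = D"
  by (simp add: is_diag_def transpose_def vec_eq_iff) metis

lemma is_diag_invertible:
  fixes D :: "real^'n^'n"
  assumes "is_diag D" and "\<And>i. D $ i $ i \<noteq> 0"
  shows "invertible D"
  using assms by (simp add: invertible_det_nz det_diagonal is_diag_def)

lemma matrix_inv_right: "invertible A \<Longrightarrow> A ** matrix_inv A = mat 1"
  unfolding invertible_def matrix_inv_def by (rule someI_ex[THEN conjunct1])

lemma matrix_inv_left: "invertible A \<Longrightarrow> matrix_inv A ** A = mat 1"
  unfolding invertible_def matrix_inv_def by (rule someI_ex[THEN conjunct2])

lemma matrix_inv_symmetric:
  fixes M :: "'a::comm_ring_1^'n^'n"
  assumes "transpose M = M" and "invertible M"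
  shows "transpose (matrix_inv M) = matrix_inv M"
proof -
  have left_inv: "transpose (matrix_inv M) ** M = mat 1"
    by (metis assms matrix_inv_right matrix_transpose_mul transpose_mat)
  have "transpose (matrix_inv M) = transpose (matrix_inv M) ** (M ** matrix_inv M)"
    by (simp add: assms(2) matrix_inv_right)
  also have "\<dots> = matrix_inv M"
    by (simp add: matrix_mul_assoc left_inv)
  finally show ?thesis .
qed

lemma congruence_matrix_inv_combination:
  fixes L M :: "real^'n^'n"
  assumes "transpose M = M" and "invertible M"
  shows "(a *\<^sub>R L + b *\<^sub>R M) ** matrix_inv M ** transpose (a *\<^sub>R L + b *\<^sub>R M)
    = (a * a) *\<^sub>R (L ** matrix_inv M ** transpose L) + (a * b) *\<^sub>R (L + transpose L) + (b * b) *\<^sub>R M"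
proof -
  have right: "(a *\<^sub>R L + b *\<^sub>R M) ** matrix_inv M = a *\<^sub>R (L ** matrix_inv M) + b *\<^sub>R mat 1"
    by (simp add: matrix_add_rdistrib assms(2) matrix_inv_right flip: scalar_matrix_assoc)
  have transp: "transpose (a *\<^sub>R L + b *\<^sub>R M) = a *\<^sub>R transpose L + b *\<^sub>R M"
    by (simp add: transpose_add transpose_scalar assms(1))
  have cancel: "L ** matrix_inv M ** M = L"
    by (simp add: assms(2) matrix_inv_left flip: matrix_mul_assoc)
  have "(a *\<^sub>R L + b *\<^sub>R M) ** matrix_inv M ** transpose (a *\<^sub>R L + b *\<^sub>R M)
      = (a *\<^sub>R (L ** matrix_inv M) + b *\<^sub>R mat 1) ** (a *\<^sub>R transpose L + b *\<^sub>R M)"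
    by (simp only: right transp)
  also have "\<dots> = (a * a) *\<^sub>R (L ** matrix_inv M ** transpose L)
      + (a * b) *\<^sub>R (L + transpose L) + (b * b) *\<^sub>R M"
    by (simp add: cancel matrix_add_rdistrib matrix_add_ldistrib matrix_scalar_ac
        flip: scalar_matrix_assoc) (simp add: algebra_simps)
  finally show ?thesis .
qed

lemma congruence_mult_matrix_inv:
  fixes K M :: "real^'n^'n"
  assumes "transpose M = M" and "invertible M"
  shows "(K ** matrix_inv M) ** M ** transpose (K ** matrix_inv M) = K ** matrix_inv M ** transpose K"
proof -
  have "(K ** matrix_inv M) ** M = K"
    by (simp add: assms(2) matrix_inv_left flip: matrix_mul_assoc)
  moreover have "transpose (K ** matrix_inv M) = matrix_inv M ** transpose K"
    by (simp add: matrix_transpose_mul matrix_inv_symmetric assms)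
  ultimately show ?thesis
    by (simp add: matrix_mul_assoc)
qed

lemma sqrt_weight_products:
  fixes \<nu> \<alpha>u \<alpha>y :: real
  defines "D \<equiv> \<alpha>y^2 * \<nu> + \<alpha>u^2"
  assumes "\<nu> > 0" and "\<alpha>u \<ge> 0" and "\<alpha>y \<ge> 0" and "max \<alpha>u \<alpha>y > 0"
  defines "a \<equiv> sqrt \<nu> * sqrt (1 - \<alpha>y^2 * \<nu> / D)" and "b \<equiv> sqrt (1 - \<alpha>u^2 / D)"
  shows "a * a = \<nu> - (\<alpha>y * \<nu>) * (\<alpha>y * \<nu>) / D"
    and "a * b = (\<alpha>y * \<nu>) * \<alpha>u / D"
    and "b * b = 1 - \<alpha>u * \<alpha>u / D"
proof -
  have "D > 0"
    using assms(2-5) unfolding D_def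
    by (cases "\<alpha>y > 0") (auto simp: add_pos_nonneg add_nonneg_pos max_def split: if_splits)
  then have weights: "1 - \<alpha>y^2 * \<nu> / D = \<alpha>u^2 / D" "1 - \<alpha>u^2 / D = \<alpha>y^2 * \<nu> / D"
    by (simp_all add: D_def field_simps)
  show "a * a = \<nu> - (\<alpha>y * \<nu>) * (\<alpha>y * \<nu>) / D"
    using \<open>D > 0\<close> assms(2) unfolding a_def weights
    by (simp add: D_def field_simps power2_eq_square)
  show "a * b = (\<alpha>y * \<nu>) * \<alpha>u / D"
  proof -
    have "a * b = sqrt (((\<alpha>y * \<nu>) * \<alpha>u / D)^2)"
      unfolding a_def b_def weights
      by (simp add: real_sqrt_mult[symmetric] power2_eq_square field_simps)
    then show ?thesis
      using assms(2-4) \<open>D > 0\<close> by simp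
  qed
  show "b * b = 1 - \<alpha>u * \<alpha>u / D"
  proof -
    have "0 \<le> 1 - \<alpha>u^2 / D"
      unfolding weights using \<open>D > 0\<close> assms(2) by simp
    then show ?thesis
      unfolding b_def by (simp add: power2_eq_square)
  qed
qed

theorem corollary4p2:
  fixes M L :: "real^'n^'n" and A :: "'n set"
    and \<nu> \<alpha>u \<alpha>y \<gamma>1 \<gamma>2 :: real
  assumes "\<nu> > 0" and "\<alpha>u \<ge> 0" and "\<alpha>y \<ge> 0" and "max \<alpha>u \<alpha>y > 0"
    and "is_diag M" and "\<forall>i. M $ i $ i > 0"
    and "\<gamma>1 = \<alpha>y^2 * \<nu> / (\<alpha>y^2 * \<nu> + \<alpha>u^2)"
    and "\<gamma>2 = \<alpha>u^2 / (\<alpha>y^2 * \<nu> + \<alpha>u^2)"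
    and "A = UNIV"
  shows "(let Pi = sel_mat A; Mi = matrix_inv M;
              B = ((\<alpha>y * \<nu>) *\<^sub>R (L ** Mi)) - \<alpha>u *\<^sub>R mat 1;
              S = \<nu> *\<^sub>R (L ** Mi ** transpose L) + M
                  - (1 / (\<alpha>y^2 * \<nu> + \<alpha>u^2)) *\<^sub>R (B ** Pi ** M ** Pi ** transpose B);
              L1 = sqrt \<nu> *\<^sub>R (L ** diag_sqrt (mat 1 - \<gamma>1 *\<^sub>R Pi))
                   + diag_sqrt (mat 1 - \<gamma>2 *\<^sub>R Pi) ** M
          in L1 ** Mi ** transpose L1 = S)"
proof -
  define D where "D = \<alpha>y^2 * \<nu> + \<alpha>u^2"
  define a where "a = sqrt \<nu> * sqrt (1 - \<alpha>y^2 * \<nu> / D)"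
  define b where "b = sqrt (1 - \<alpha>u^2 / D)"
  note weights = sqrt_weight_products[OF assms(1-4), folded D_def, folded a_def b_def]
  have M_symm: "transpose M = M"
    using assms(5) by (rule is_diag_transpose)
  have M_inv: "invertible M"
    using assms(5) by (rule is_diag_invertible) (use assms(6) in \<open>metis less_irrefl\<close>)
  have "mat 1 - k *\<^sub>R mat 1 = (1 - k) *\<^sub>R (mat 1 :: real^'n^'n)" for k
    by (simp add: scaleR_diff_left)
  then have L1: "sqrt \<nu> *\<^sub>R (L ** diag_sqrt (mat 1 - \<gamma>1 *\<^sub>R mat 1))
      + diag_sqrt (mat 1 - \<gamma>2 *\<^sub>R mat 1) ** M = a *\<^sub>R L + b *\<^sub>R M"
    by (simp add: diag_sqrt_scaleR_mat_1 matrix_scalar_ac a_def b_def assms(7,8) D_def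
        flip: scalar_matrix_assoc)
  have B: "(\<alpha>y * \<nu>) *\<^sub>R (L ** matrix_inv M) - \<alpha>u *\<^sub>R mat 1
      = ((\<alpha>y * \<nu>) *\<^sub>R L + (- \<alpha>u) *\<^sub>R M) ** matrix_inv M"
    by (simp add: matrix_diff_rdistrib M_inv matrix_inv_right flip: scalar_matrix_assoc)
  show ?thesis
    unfolding Let_def assms(9) sel_mat_UNIV matrix_mul_rid L1 D_def[symmetric] B
      congruence_mult_matrix_inv[OF M_symm M_inv]
      congruence_matrix_inv_combination[OF M_symm M_inv] weights
    by (simp add: algebra_simps divide_inverse)
qed

end
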